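(* Let $c>0$, let $\widetilde{\theta_c}$ be as in the context, and let $X:\mathbb{C}\to\widetilde{E(2)}$ be the map described in the context with $\theta=\widetilde{\theta_c}$. Then there exists $Z\in\mathbb{C}\setminus\{0\}$ such that $X(z+Z)=X(z)$ for all $z\in\mathbb{C}$.
   Context: $\widetilde{E(2)}$ is $\mathbb{R}^3$ with coordinates $(x_1,x_2,x_3)$ and group law $(a_1,b_1,c_1)*(a_2,b_2,c_2)=(a_1+a_2\cos c_1-b_2\sin c_1,\ b_1+a_2\sin c_1+b_2\cos c_1,\ c_1+c_2)$, with the left-invariant metric $\lambda_1^2(\cos x_3\,dx_1+\sin x_3\,dx_2)^2+\lambda_2^2(-\sin x_3\,dx_1+\cos x_3\,dx_2)^2+\frac{1}{\lambda_1^2\lambda_2^2}dx_3^2$, where either $\lambda_1>\lambda_2>0$ or $\lambda_1=\lambda_2=1$. For $c>0$: $\theta_c^+=\pi$ if $c>\sqrt2\lambda_1$, $\theta_c^+=\arccos(1-c^2/\lambda_1^2)$ if $0<c\le\sqrt2\lambda_1$; $\Omega=\{(c,\theta):c>0,\ |\theta|<\theta_c^+\}$. For $(c,\theta)\in\Omega$: $D=\sin\theta/c$; $\varphi$ is the global solution of $\varphi'(u)=\sqrt{c^2+2\cos\theta\,B(u)-D^2B(u)^2}$, $\varphi(0)=0$, with $B(u)=\lambda_1^2\cos^2\varphi(u)+\lambda_2^2\sin^2\varphi(u)$ ($\varphi$ is an increasing bijection of $\mathbb{R}$); $U>0$ is the unique number with $\varphi(U)=\pi$; $f$ solves $f'=DB$,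 $f(0)=0$; $G(u)=\int_0^u\frac{c-\varphi'(s)}{B(s)}ds$; $H(c,\theta)=Df(U)+cG(U)$. For each $c>0$, $\widetilde{\theta_c}$ denotes the unique $\theta\in(0,\pi/2)\cap(0,\theta_c^+)$ with $H(c,\theta)=0$. The map $X=(x_1,x_2,x_3)$ is: $x_3(u+iv)=-\lambda_1\lambda_2Dv+\lambda_1\lambda_2G(u)$; with $A=f(u)+cv$, $M_1=c\cos x_3\cosh A-\lambda_1\lambda_2D\sin x_3\sinh A$, $M_2=c\cos x_3\sinh A-\lambda_1\lambda_2D\sin x_3\cosh A$, $M_3=c\sin x_3\sinh A+\lambda_1\lambda_2D\cos x_3\cosh A$, $M_4=c\sin x_3\cosh A+\lambda_1\lambda_2D\cos x_3\sinh A$, $x_1=-\frac{1}{(c^2+\lambda_1^2\lambda_2^2D^2)B}[\frac{1}{\lambda_1}f'\cos\varphi\,M_1-\frac{1}{\lambda_1}(c-\varphi')\sin\varphi\,M_2-\frac{1}{\lambda_2}(c-\varphi')\cos\varphi\,M_3-\frac{1}{\lambda_2}f'\sin\varphi\,M_4]$, $x_2=-\frac{1}{(c^2+\lambda_1^2\lambda_2^2D^2)B}[\frac{1}{\lambda_1}f'\cos\varphi\,M_4-\frac{1}{\lambda_1}(c-\varphi')\sin\varphi\,M_3+\frac{1}{\lambda_2}(c-\varphi')\cos\varphi\,M_2+\frac{1}{\lambda_2}f'\sin\varphi\,M_1]$, all functions of $u$ evaluated at $u$. (It is a conformal minimal immersion.) *)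

theory Defs
  imports "HOL-Analysis.Analysis"
begin

definition Bfun :: "real \<Rightarrow> real \<Rightarrow> real \<Rightarrow> real" where
  "Bfun l1 l2 p = l1^2 * (cos p)^2 + l2^2 * (sin p)^2"

definition Dc :: "real \<Rightarrow> real \<Rightarrow> real" where
  "Dc c \<theta> = sin \<theta> / c"

definition theta_plus :: "real \<Rightarrow> real \<Rightarrow> real" where
  "theta_plus l1 c = (if c > sqrt 2 * l1 then pi else arccos (1 - c^2 / l1^2))"

definition in_Omega :: "real \<Rightarrow> real \<Rightarrow> real \<Rightarrow> bool" where
  "in_Omega l1 c \<theta> \<longleftrightarrow> c > 0 \<and> \<bar>\<theta>\<bar> < theta_plus l1 c"

definition phirhs :: "real \<Rightarrow> real \<Rightarrow> real \<Rightarrow> real \<Rightarrow> real \<Rightarrow> real" where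
  "phirhs l1 l2 c \<theta> p =
     sqrt (c^2 + 2 * cos \<theta> * Bfun l1 l2 p - (Dc c \<theta>)^2 * (Bfun l1 l2 p)^2)"

definition phi :: "real \<Rightarrow> real \<Rightarrow> real \<Rightarrow> real \<Rightarrow> real \<Rightarrow> real" where
  "phi l1 l2 c \<theta> = (THE \<phi>. \<phi> 0 = 0 \<and>
      (\<forall>u. (\<phi> has_real_derivative phirhs l1 l2 c \<theta> (\<phi> u)) (at u)))"

definition dphi :: "real \<Rightarrow> real \<Rightarrow> real \<Rightarrow> real \<Rightarrow> real \<Rightarrow> real" where
  "dphi l1 l2 c \<theta> u = phirhs l1 l2 c \<theta> (phi l1 l2 c \<theta> u)"

definition Bu :: "real \<Rightarrow> real \<Rightarrow> real \<Rightarrow> real \<Rightarrow> real \<Rightarrow> real" where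
  "Bu l1 l2 c \<theta> u = Bfun l1 l2 (phi l1 l2 c \<theta> u)"

definition Uper :: "real \<Rightarrow> real \<Rightarrow> real \<Rightarrow> real \<Rightarrow> real" where
  "Uper l1 l2 c \<theta> = (THE U. U > 0 \<and> phi l1 l2 c \<theta> U = pi)"

definition ffun :: "real \<Rightarrow> real \<Rightarrow> real \<Rightarrow> real \<Rightarrow> real \<Rightarrow> real" where
  "ffun l1 l2 c \<theta> = (THE g. g 0 = 0 \<and>
      (\<forall>u. (g has_real_derivative Dc c \<theta> * Bu l1 l2 c \<theta> u) (at u)))"

definition Gfun :: "real \<Rightarrow> real \<Rightarrow> real \<Rightarrow> real \<Rightarrow> real \<Rightarrow> real" where
  "Gfun l1 l2 c \<theta> u = interval_lebesgue_integral lborel (ereal 0) (ereal u)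
      (\<lambda>s. (c - dphi l1 l2 c \<theta> s) / Bu l1 l2 c \<theta> s)"

definition Hfun :: "real \<Rightarrow> real \<Rightarrow> real \<Rightarrow> real \<Rightarrow> real" where
  "Hfun l1 l2 c \<theta> = Dc c \<theta> * ffun l1 l2 c \<theta> (Uper l1 l2 c \<theta>)
                     + c * Gfun l1 l2 c \<theta> (Uper l1 l2 c \<theta>)"

definition theta_tilde :: "real \<Rightarrow> real \<Rightarrow> real \<Rightarrow> real" where
  "theta_tilde l1 l2 c = (THE \<theta>. 0 < \<theta> \<and> \<theta> < pi / 2 \<and> \<theta> < theta_plus l1 c
                              \<and> Hfun l1 l2 c \<theta> = 0)"

text \<open>The conformal minimal immersion X : C -> E(2)~ = R^3, z = u + i v.\<close>
definition Xmap :: "real \<Rightarrow> real \<Rightarrow> real \<Rightarrow> real \<Rightarrow> complex \<Rightarrow> real \<times> real \<times> real" where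
  "Xmap l1 l2 c \<theta> z =
    (let u = Re z; v = Im z;
         D = Dc c \<theta>;
         B = Bu l1 l2 c \<theta> u;
         p = phi l1 l2 c \<theta> u;
         dp = dphi l1 l2 c \<theta> u;
         df = D * B;
         x3 = - l1 * l2 * D * v + l1 * l2 * Gfun l1 l2 c \<theta> u;
         A = ffun l1 l2 c \<theta> u + c * v;
         M1 = c * cos x3 * cosh A - l1 * l2 * D * sin x3 * sinh A;
         M2 = c * cos x3 * sinh A - l1 * l2 * D * sin x3 * cosh A;
         M3 = c * sin x3 * sinh A + l1 * l2 * D * cos x3 * cosh A;
         M4 = c * sin x3 * cosh A + l1 * l2 * D * cos x3 * sinh A;
         K = (c^2 + l1^2 * l2^2 * D^2) * B;
         x1 = - (1 / K) * ((1 / l1) * df * cos p * M1 - (1 / l1) * (c - dp) * sin p * M2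
                          - (1 / l2) * (c - dp) * cos p * M3 - (1 / l2) * df * sin p * M4);
         x2 = - (1 / K) * ((1 / l1) * df * cos p * M4 - (1 / l1) * (c - dp) * sin p * M3
                          + (1 / l2) * (c - dp) * cos p * M2 + (1 / l2) * df * sin p * M1)
     in (x1, x2, x3))"

end

theory Submission
  imports Defs
begin

(* Since B is pi-periodic and phi' = g(phi) with g = phirhs positive and pi-periodic, phi is the
   inverse of T(x) = int_0^x dp / g(p), and phi(u + U) = phi(u) + pi with U = T(pi).  Hence B and
   phi' are U-periodic, while f and G increase by f(U) and G(U) over each period.  Shifting z by
   Z = 2U - 2 i f(U) / c leaves A = f + c v and cos phi, sin phi unchanged and adds
   2 l1 l2 (D f(U) + c G(U)) / c = 2 l1 l2 H / c to x3, which vanishes at theta = theta_tilde.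
   That theta_tilde exists and is unique comes from writing H, via p = phi(u), as the integral over
   [0, pi] of a function strictly increasing in theta on [0, pi/2]: it is negative at theta = 0, and
   positive either at pi/2 (if c > l1) or close to theta_c^+ (if c <= l1), where the integral blows
   up like -log of the lower bound of phi'. *)

section \<open>Antiderivatives on the real line\<close>

lemma has_real_derivative_interval_integral_from_0:
  fixes h :: "real \<Rightarrow> real"
  assumes "continuous_on UNIV h"
  shows "((\<lambda>x. LBINT t=ereal 0..ereal x. h t) has_real_derivative h x) (at x)"
proof -
  define a where "a = - \<bar>x\<bar> - 1"
  define b where "b = \<bar>x\<bar> + 1"
  have "((\<lambda>u. LBINT t=ereal 0..ereal u. h t) has_vector_derivative h x) (at x within {a..b})"
    by (rule interval_integral_FTC2) (auto simp: a_def b_def intro: continuous_on_subset[OF assms])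
  then have "((\<lambda>u. LBINT t=ereal 0..ereal u. h t) has_vector_derivative h x) (at x within {a<..<b})"
    by (rule has_vector_derivative_within_subset) auto
  then have "((\<lambda>u. LBINT t=ereal 0..ereal u. h t) has_vector_derivative h x) (at x)"
    by (subst (asm) has_vector_derivative_within_open) (auto simp: a_def b_def)
  then show ?thesis
    by (simp add: has_real_derivative_iff_has_vector_derivative)
qed

lemma DERIV_eq_imp_eq:
  fixes f g :: "real \<Rightarrow> real"
  assumes "\<And>x. (f has_real_derivative h x) (at x)" "\<And>x. (g has_real_derivative h x) (at x)"
    and "f 0 = g 0"
  shows "f = g"
proof
  fix x
  have "\<forall>x. ((\<lambda>x. f x - g x) has_real_derivative 0) (at x)"
    using DERIV_diff[OF assms(1,2)] by fastforce
  from DERIV_isconst_all[OF this, of x 0] assms(3) show "f x = g x" by simp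
qed

lemma DERIV_periodic_imp_shift_add:
  fixes f :: "real \<Rightarrow> real"
  assumes f': "\<And>x. (f has_real_derivative f' x) (at x)" and per: "\<And>x. f' (x + p) = f' x"
  shows "f (x + p) = f x + (f p - f 0)"
proof -
  have "(\<lambda>x. f (x + p)) = (\<lambda>x. f x + (f p - f 0))"
  proof (rule DERIV_eq_imp_eq)
    show "((\<lambda>x. f (x + p)) has_real_derivative f' x) (at x)" for x
      using f'[of "x + p"] per[of x] by (simp add: DERIV_shift)
    show "((\<lambda>x. f x + (f p - f 0)) has_real_derivative f' x) (at x)" for x
      using f'[of x] by (auto intro!: derivative_eq_intros)
  qed simp
  then show ?thesis by (rule fun_cong)
qed

section \<open>The flow of u' = g(u) for a positive bounded g\<close>

locale bounded_positive_rhs =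
  fixes g :: "real \<Rightarrow> real" and M :: real
  assumes g_cont: "continuous_on UNIV g" and g_pos: "\<And>x. 0 < g x" and g_le: "\<And>x. g x \<le> M"
begin

definition time :: "real \<Rightarrow> real" where
  "time x = (LBINT t=ereal 0..ereal x. 1 / g t)"

definition flow :: "real \<Rightarrow> real" where
  "flow = inv time"

lemma time_0 [simp]: "time 0 = 0"
  by (simp add: time_def)

lemma time_deriv: "(time has_real_derivative 1 / g x) (at x)"
  unfolding time_def using g_pos
  by (intro has_real_derivative_interval_integral_from_0 continuous_intros g_cont) (auto simp: less_le)

lemma continuous_on_time: "continuous_on S time"
  by (intro continuous_at_imp_continuous_on ballI DERIV_isCont[OF time_deriv])

lemma strict_mono_time: "strict_mono time"
proof (rule strict_monoI)
  fix x y :: real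
  assume "x < y"
  have "\<exists>d. (time has_real_derivative d) (at t) \<and> 0 < d" for t
    using time_deriv[of t] g_pos[of t] by force
  then show "time x < time y"
    using DERIV_pos_imp_increasing[OF \<open>x < y\<close>] by blast
qed

lemma time_minus_linear_mono:
  assumes "x \<le> y"
  shows "time x - x / M \<le> time y - y / M"
proof -
  have "0 < M" using g_pos g_le by (meson less_le_trans)
  have "\<exists>d. ((\<lambda>x. time x - x / M) has_real_derivative d) (at t) \<and> 0 \<le> d" for t
  proof (intro exI conjI)
    show "((\<lambda>x. time x - x / M) has_real_derivative 1 / g t - 1 / M) (at t)"
      using \<open>0 < M\<close> by (auto intro!: derivative_eq_intros time_deriv)
    show "0 \<le> 1 / g t - 1 / M"
      using g_pos g_le by (simp add: frac_le)
  qed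
  then show ?thesis
    using DERIV_nonneg_imp_nondecreasing[OF assms] by blast
qed

lemma surj_time: "surj time"
proof -
  have "0 < M" using g_pos g_le by (meson less_le_trans)
  have "\<exists>x. time x = u" for u
  proof (cases "0 \<le> u")
    case True
    then have "u \<le> time (u * M)"
      using time_minus_linear_mono[of 0 "u * M"] \<open>0 < M\<close> by simp
    then show ?thesis
      using IVT'[of time 0 u "u * M"] True \<open>0 < M\<close> continuous_on_time by auto
  next
    case False
    then have "time (u * M) \<le> u"
      using time_minus_linear_mono[of "u * M" 0] \<open>0 < M\<close> by (simp add: mult_nonpos_nonneg)
    then show ?thesis
      using IVT'[of time "u * M" u 0] False \<open>0 < M\<close> continuous_on_time by (auto simp: mult_nonpos_nonneg)
  qed
  then show ?thesis by (metis surjI)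
qed

lemma flow_time [simp]: "flow (time x) = x"
  unfolding flow_def by (rule inv_f_f[OF strict_mono_on_imp_inj_on[OF strict_mono_time]])

lemma time_flow [simp]: "time (flow u) = u"
  unfolding flow_def by (rule surj_f_inv_f[OF surj_time])

lemma flow_0 [simp]: "flow 0 = 0"
  using flow_time[of 0] by simp

lemma flow_deriv: "(flow has_real_derivative g (flow u)) (at u)"
proof -
  have "isCont flow (time (flow u))"
    by (rule isCont_inverse_function[where f = time and d = 1]) (auto intro: DERIV_isCont[OF time_deriv])
  then have "isCont flow u" by simp
  then have "(flow has_real_derivative inverse (1 / g (flow u))) (at u)"
    by (intro DERIV_inverse_function[where f = time and a = "u - 1" and b = "u + 1"] time_deriv)
      (use g_pos[of "flow u"] in auto)
  then show ?thesis by simp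
qed

lemma flow_unique:
  assumes "\<psi> 0 = 0" and "\<And>u. (\<psi> has_real_derivative g (\<psi> u)) (at u)"
  shows "\<psi> = flow"
proof -
  have "time \<circ> \<psi> = id"
  proof (rule DERIV_eq_imp_eq)
    show "(time \<circ> \<psi> has_real_derivative 1) (at u)" for u
      using DERIV_chain[OF time_deriv assms(2)[of u]] g_pos[of "\<psi> u"] by simp
  qed (auto simp: assms(1) id_def)
  then have "\<psi> u = flow u" for u
    using flow_time[of "\<psi> u"] by (metis comp_apply id_apply)
  then show ?thesis ..
qed

lemma the_solution_eq_flow:
  "(THE \<psi>. \<psi> 0 = 0 \<and> (\<forall>u. (\<psi> has_real_derivative g (\<psi> u)) (at u))) = flow"
  by (rule the_equality) (auto intro: flow_unique flow_deriv)

lemma flow_shift_period: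
  assumes "\<And>x. g (x + p) = g x"
  shows "flow (u + time p) = flow u + p"
proof -
  have "u + time p = time (flow u + p)"
    using DERIV_periodic_imp_shift_add[OF time_deriv, of p "flow u"] assms by simp
  then show ?thesis by simp
qed

end

lemma the_antiderivative_eq_integral:
  fixes h :: "real \<Rightarrow> real"
  assumes "continuous_on UNIV h"
  shows "(THE F. F 0 = 0 \<and> (\<forall>u. (F has_real_derivative h u) (at u))) = (\<lambda>x. LBINT t=ereal 0..ereal x. h t)"
proof (rule the_equality)
  show "(LBINT t=ereal 0..ereal 0. h t) = 0 \<and>
      (\<forall>u. ((\<lambda>x. LBINT t=ereal 0..ereal x. h t) has_real_derivative h u) (at u))"
    using has_real_derivative_interval_integral_from_0[OF assms] by simp
  show "F = (\<lambda>x. LBINT t=ereal 0..ereal x. h t)"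
    if "F 0 = 0 \<and> (\<forall>u. (F has_real_derivative h u) (at u))" for F
    using that has_real_derivative_interval_integral_from_0[OF assms]
    by (intro DERIV_eq_imp_eq[where h = h]) auto
qed

section \<open>The construction for a fixed admissible (c, theta)\<close>

lemma Bfun_eq_sin: "Bfun l1 l2 p = l1^2 - (l1^2 - l2^2) * (sin p)^2"
  unfolding Bfun_def using sin_cos_squared_add[of p] by algebra

lemma Bfun_add_pi [simp]: "Bfun l1 l2 (p + pi) = Bfun l1 l2 p"
  by (simp add: Bfun_def)

lemma continuous_on_Bfun: "continuous_on S (Bfun l1 l2)"
  unfolding Bfun_def by (intro continuous_intros)

lemma Bfun_bounds:
  assumes "l2^2 \<le> l1^2"
  shows "l2^2 \<le> Bfun l1 l2 p" and "Bfun l1 l2 p \<le> l1^2"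
proof -
  have "0 \<le> (l1^2 - l2^2) * (sin p)^2" "(l1^2 - l2^2) * (sin p)^2 \<le> l1^2 - l2^2"
    using assms by (auto intro: mult_left_le simp: abs_square_le_1)
  then show "l2^2 \<le> Bfun l1 l2 p" "Bfun l1 l2 p \<le> l1^2"
    unfolding Bfun_eq_sin by linarith+
qed

lemma phirhs_radicand_eq:
  assumes "c \<noteq> 0"
  shows "c^2 * (c^2 + 2 * cos th * b - (Dc c th)^2 * b^2) = (c^2 + cos th * b)^2 - b^2"
proof -
  have "c^2 * (Dc c th)^2 = 1 - (cos th)^2"
    using assms by (simp add: Dc_def power_divide sin_squared_eq)
  then show ?thesis by algebra
qed

definition H_integrand :: "real \<Rightarrow> real \<Rightarrow> real \<Rightarrow> real \<Rightarrow> real \<Rightarrow> real" where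
  "H_integrand l1 l2 c th p =
     ((Dc c th)^2 * (Bfun l1 l2 p)^2 + c^2) / (phirhs l1 l2 c th p * Bfun l1 l2 p) - c / Bfun l1 l2 p"

definition H_integral :: "real \<Rightarrow> real \<Rightarrow> real \<Rightarrow> real \<Rightarrow> real" where
  "H_integral l1 l2 c th = integral {0..pi} (H_integrand l1 l2 c th)"

text \<open>For 0 \<le> th < pi the last assumption says th < theta_plus l1 c, see \<open>less_theta_plus_iff\<close>.\<close>
locale admissible =
  fixes l1 l2 c th :: real
  assumes l2_pos: "0 < l2" and l2_le_l1: "l2 \<le> l1" and c_pos: "0 < c"
    and cos_gt: "1 - c^2 / l1^2 < cos th"
begin

abbreviation "B \<equiv> Bfun l1 l2"
abbreviation "g \<equiv> phirhs l1 l2 c th"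
abbreviation "radicand p \<equiv> c^2 + 2 * cos th * B p - (Dc c th)^2 * (B p)^2"

text \<open>A positive lower bound for the radicand of phirhs; it tends to 0 as th approaches theta_plus.\<close>
definition margin :: real where
  "margin = c^2 - (1 - cos th) * l1^2"

lemma l1_pos: "0 < l1"
  using l2_pos l2_le_l1 by linarith

lemma margin_pos: "0 < margin"
proof -
  have "(1 - c^2 / l1^2) * l1^2 < cos th * l1^2"
    using cos_gt l1_pos by simp
  then show ?thesis
    using l1_pos by (simp add: margin_def algebra_simps)
qed

lemma B_ge: "l2^2 \<le> B p" and B_le: "B p \<le> l1^2"
  using Bfun_bounds[of l2 l1 p] l2_pos l2_le_l1 by (auto intro: power_mono)

lemma B_pos: "0 < B p"
  using B_ge[of p] l2_pos by (meson less_le_trans zero_less_power)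

lemma radicand_factor: "c^2 * radicand p = (c^2 - (1 - cos th) * B p) * (c^2 + (1 + cos th) * B p)"
proof -
  have "(c^2 + cos th * B p)^2 - (B p)^2 = (c^2 - (1 - cos th) * B p) * (c^2 + (1 + cos th) * B p)"
    by algebra
  with phirhs_radicand_eq[of c th "B p"] c_pos show ?thesis by simp
qed

lemma margin_le_first_factor: "margin \<le> c^2 - (1 - cos th) * B p"
  unfolding margin_def using B_le[of p] by (simp add: mult_left_mono)

lemma c_sq_le_second_factor: "c^2 \<le> c^2 + (1 + cos th) * B p"
proof -
  have "0 \<le> 1 + cos th"
    using cos_ge_minus_one[of th] by linarith
  then show ?thesis
    using B_pos[of p] by simp
qed

lemma radicand_ge_margin: "margin \<le> radicand p"
proof -
  have "margin * c^2 \<le> c^2 * radicand p"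
    unfolding radicand_factor using margin_le_first_factor[of p] margin_pos
    by (intro mult_mono[OF margin_le_first_factor c_sq_le_second_factor]) auto
  then show ?thesis
    using c_pos by (simp add: mult.commute)
qed

lemma radicand_le: "radicand p \<le> c^2 + 2 * l1^2"
proof -
  have "cos th * B p \<le> 1 * B p"
    by (rule mult_right_mono) (use B_pos[of p] in auto)
  moreover have "0 \<le> (Dc c th)^2 * (B p)^2"
    by simp
  ultimately show ?thesis
    using B_le[of p] by linarith
qed

lemma g_sq: "(g p)^2 = radicand p"
  unfolding phirhs_def using radicand_ge_margin[of p] margin_pos by simp

lemma g_ge: "sqrt margin \<le> g p"
  unfolding phirhs_def using radicand_ge_margin[of p] by simp

lemma g_pos: "0 < g p"
  using g_ge[of p] margin_pos by (meson less_le_trans real_sqrt_gt_zero)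

lemma g_le: "g p \<le> sqrt (c^2 + 2 * l1^2)"
  unfolding phirhs_def using radicand_le[of p] by simp

lemma continuous_on_g: "continuous_on S g"
  unfolding phirhs_def by (intro continuous_intros continuous_on_Bfun)

sublocale bounded_positive_rhs g "sqrt (c^2 + 2 * l1^2)"
  by unfold_locales (auto intro: continuous_on_g g_pos g_le)

abbreviation "\<phi> \<equiv> phi l1 l2 c th"

lemma phi_eq_flow: "\<phi> = flow"
  unfolding phi_def by (rule the_solution_eq_flow)

lemma continuous_on_phi: "continuous_on S \<phi>"
  unfolding phi_eq_flow
  by (intro continuous_at_imp_continuous_on ballI DERIV_isCont[OF flow_deriv])

lemma time_pi_pos: "0 < time pi"
  using strict_monoD[OF strict_mono_time pi_gt_zero] by simp

lemma Uper_eq: "Uper l1 l2 c th = time pi"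
  unfolding Uper_def phi_eq_flow
proof (rule the_equality)
  show "0 < time pi \<and> flow (time pi) = pi"
    using time_pi_pos by simp
  show "U = time pi" if "0 < U \<and> flow U = pi" for U
    using time_flow[of U] that by simp
qed

lemma phi_shift: "\<phi> (u + time pi) = \<phi> u + pi"
  unfolding phi_eq_flow by (rule flow_shift_period) (simp add: phirhs_def)

lemma Bu_shift: "Bu l1 l2 c th (u + time pi) = Bu l1 l2 c th u"
  by (simp add: Bu_def phi_shift)

lemma dphi_shift: "dphi l1 l2 c th (u + time pi) = dphi l1 l2 c th u"
  by (simp add: dphi_def phi_shift phirhs_def)

lemma continuous_on_Bu: "continuous_on S (Bu l1 l2 c th)"
  unfolding Bu_def[abs_def] by (rule continuous_on_compose2[OF continuous_on_Bfun continuous_on_phi]) auto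

lemma Bu_pos: "0 < Bu l1 l2 c th u"
  by (simp add: Bu_def B_pos)

lemma continuous_on_dphi: "continuous_on S (dphi l1 l2 c th)"
  unfolding dphi_def[abs_def] by (rule continuous_on_compose2[OF continuous_on_g continuous_on_phi]) auto

lemma ffun_eq_integral: "ffun l1 l2 c th = (\<lambda>x. LBINT t=ereal 0..ereal x. Dc c th * Bu l1 l2 c th t)"
  unfolding ffun_def by (intro the_antiderivative_eq_integral continuous_intros continuous_on_Bu)

lemma ffun_0 [simp]: "ffun l1 l2 c th 0 = 0"
  by (simp add: ffun_eq_integral)

lemma ffun_deriv: "(ffun l1 l2 c th has_real_derivative Dc c th * Bu l1 l2 c th u) (at u)"
  unfolding ffun_eq_integral
  by (intro has_real_derivative_interval_integral_from_0 continuous_intros continuous_on_Bu)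

lemma Gfun_0 [simp]: "Gfun l1 l2 c th 0 = 0"
  by (simp add: Gfun_def)

lemma Gfun_deriv:
  "(Gfun l1 l2 c th has_real_derivative (c - dphi l1 l2 c th u) / Bu l1 l2 c th u) (at u)"
  unfolding Gfun_def[abs_def] using Bu_pos
  by (intro has_real_derivative_interval_integral_from_0 continuous_intros continuous_on_Bu
      continuous_on_dphi) (auto simp: less_le)

lemma ffun_shift: "ffun l1 l2 c th (u + time pi) = ffun l1 l2 c th u + ffun l1 l2 c th (time pi)"
  using DERIV_periodic_imp_shift_add[OF ffun_deriv] Bu_shift by simp

lemma Gfun_shift: "Gfun l1 l2 c th (u + time pi) = Gfun l1 l2 c th u + Gfun l1 l2 c th (time pi)"
  using DERIV_periodic_imp_shift_add[OF Gfun_deriv] Bu_shift dphi_shift by simp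

text \<open>Substitute p = phi(u), i.e. u = time p, in the integrals defining f(U) and G(U).\<close>
lemma Hfun_eq_H_integral: "Hfun l1 l2 c th = H_integral l1 l2 c th"
proof -
  define K where "K p = Dc c th * ffun l1 l2 c th (time p) + c * Gfun l1 l2 c th (time p)" for p
  have "(K has_real_derivative H_integrand l1 l2 c th p) (at p)" for p
  proof -
    have "(K has_real_derivative
        Dc c th * (Dc c th * B p * (1 / g p)) + c * ((c - g p) / B p * (1 / g p))) (at p)"
      unfolding K_def using DERIV_chain2[OF ffun_deriv time_deriv] DERIV_chain2[OF Gfun_deriv time_deriv]
      by (auto intro!: derivative_eq_intros simp: Bu_def dphi_def phi_eq_flow mult_ac)
    moreover have "Dc c th * (Dc c th * B p * (1 / g p)) + c * ((c - g p) / B p * (1 / g p))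
        = H_integrand l1 l2 c th p"
      unfolding H_integrand_def using g_pos[of p] B_pos[of p]
      by (simp add: field_simps power2_eq_square)
    ultimately show ?thesis by simp
  qed
  then have "(H_integrand l1 l2 c th has_integral K pi - K 0) {0..pi}"
    by (intro fundamental_theorem_of_calculus)
      (auto simp: has_real_derivative_iff_has_vector_derivative intro: has_vector_derivative_at_within)
  moreover have "K pi - K 0 = Hfun l1 l2 c th"
    by (simp add: K_def Hfun_def Uper_eq)
  ultimately show ?thesis
    unfolding H_integral_def by (simp add: integral_unique)
qed

lemma shift_two_periods:
  shows "\<phi> (u + 2 * time pi) = \<phi> u + 2 * pi"
    and "Bu l1 l2 c th (u + 2 * time pi) = Bu l1 l2 c th u"
    and "dphi l1 l2 c th (u + 2 * time pi) = dphi l1 l2 c th u"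
    and "ffun l1 l2 c th (u + 2 * time pi) = ffun l1 l2 c th u + 2 * ffun l1 l2 c th (time pi)"
    and "Gfun l1 l2 c th (u + 2 * time pi) = Gfun l1 l2 c th u + 2 * Gfun l1 l2 c th (time pi)"
proof -
  have twice: "u + 2 * time pi = (u + time pi) + time pi" by simp
  show "\<phi> (u + 2 * time pi) = \<phi> u + 2 * pi"
    unfolding twice phi_shift by simp
  show "Bu l1 l2 c th (u + 2 * time pi) = Bu l1 l2 c th u"
    unfolding twice Bu_shift ..
  show "dphi l1 l2 c th (u + 2 * time pi) = dphi l1 l2 c th u"
    unfolding twice dphi_shift ..
  show "ffun l1 l2 c th (u + 2 * time pi) = ffun l1 l2 c th u + 2 * ffun l1 l2 c th (time pi)"
    unfolding twice ffun_shift by simp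
  show "Gfun l1 l2 c th (u + 2 * time pi) = Gfun l1 l2 c th u + 2 * Gfun l1 l2 c th (time pi)"
    unfolding twice Gfun_shift by simp
qed

text \<open>Over one period U, phi grows by pi and so cos phi and sin phi change sign; hence the shift 2U.\<close>
lemma Xmap_shift_period:
  assumes "Hfun l1 l2 c th = 0"
  shows "Xmap l1 l2 c th (z + Complex (2 * time pi) (- 2 * ffun l1 l2 c th (time pi) / c))
    = Xmap l1 l2 c th z"
proof -
  let ?U = "time pi" and ?f = "ffun l1 l2 c th" and ?G = "Gfun l1 l2 c th" and ?D = "Dc c th"
  define u where "u = Re z"
  define v where "v = Im z"
  have cos2: "cos (\<phi> (u + 2 * ?U)) = cos (\<phi> u)" and sin2: "sin (\<phi> (u + 2 * ?U)) = sin (\<phi> u)"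
    unfolding shift_two_periods(1) by (simp_all add: cos_add sin_add)
  have "- l1 * l2 * ?D * (v - 2 * ?f ?U / c) + l1 * l2 * ?G (u + 2 * ?U)
      = - l1 * l2 * ?D * v + l1 * l2 * ?G u + 2 * l1 * l2 * (?D * ?f ?U + c * ?G ?U) / c"
    unfolding shift_two_periods(5) using c_pos by (simp add: field_simps)
  also have "?D * ?f ?U + c * ?G ?U = 0"
    using assms by (simp add: Hfun_def Uper_eq)
  finally have x3: "- l1 * l2 * ?D * (v - 2 * ?f ?U / c) + l1 * l2 * ?G (u + 2 * ?U)
      = - l1 * l2 * ?D * v + l1 * l2 * ?G u"
    by simp
  have A: "?f (u + 2 * ?U) + c * (v - 2 * ?f ?U / c) = ?f u + c * v"
    unfolding shift_two_periods(4) using c_pos by (simp add: algebra_simps)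
  have re: "Re (z + Complex (2 * ?U) (- 2 * ?f ?U / c)) = u + 2 * ?U"
    and im: "Im (z + Complex (2 * ?U) (- 2 * ?f ?U / c)) = v - 2 * ?f ?U / c"
    by (simp_all add: u_def v_def)
  show ?thesis
    unfolding Xmap_def Let_def re im u_def[symmetric] v_def[symmetric] shift_two_periods(2,3)
      cos2 sin2 x3 A ..
qed

lemma c_sq_g_sq: "c^2 * (g p)^2 = (c^2 + cos th * B p)^2 - (B p)^2"
  unfolding g_sq using phirhs_radicand_eq[of c th "B p"] c_pos by simp

lemma c_g_le_linear:
  assumes "0 \<le> cos th" and "0 \<le> p"
  shows "c * g p \<le> (sqrt margin + sqrt (l1^2 - l2^2 + 1) * p) * sqrt (c^2 + 2 * l1^2)"
proof -
  define a where "a = sqrt margin"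
  define b where "b = sqrt (l1^2 - l2^2 + 1)"
  have l12: "0 \<le> l1^2 - l2^2"
    using l2_pos l2_le_l1 by (simp add: power_mono)
  have a: "0 < a" and b: "0 < b"
    using margin_pos l12 by (simp_all add: a_def b_def add_nonneg_pos)
  have "l1^2 - B p = (l1^2 - l2^2) * (sin p)^2"
    by (simp add: Bfun_eq_sin)
  also have "\<dots> \<le> b^2 * p^2"
    using l12 abs_sin_x_le_abs_x[of p] by (intro mult_mono) (simp_all add: b_def abs_le_square_iff)
  finally have B_near: "l1^2 - B p \<le> b^2 * p^2" .
  have "c^2 - (1 - cos th) * B p = margin + (1 - cos th) * (l1^2 - B p)"
    by (simp add: margin_def algebra_simps)
  also have "\<dots> \<le> a^2 + 1 * (b^2 * p^2)"
    using assms(1) B_near B_le[of p] margin_pos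
    by (intro add_mono mult_mono) (simp_all add: a_def)
  also have "\<dots> \<le> (a + b * p)^2"
    using a b assms(2) by (simp add: power2_sum power_mult_distrib)
  finally have first: "c^2 - (1 - cos th) * B p \<le> (a + b * p)^2" .
  have second: "c^2 + (1 + cos th) * B p \<le> c^2 + 2 * l1^2"
    using B_le[of p] B_pos[of p] by (simp add: mult_mono)
  have "(c * g p)^2 = (c^2 - (1 - cos th) * B p) * (c^2 + (1 + cos th) * B p)"
    using g_sq radicand_factor by (simp add: power_mult_distrib)
  also have "\<dots> \<le> (a + b * p)^2 * (c^2 + 2 * l1^2)"
    using margin_le_first_factor[of p] c_sq_le_second_factor[of p] margin_pos
    by (intro mult_mono[OF first second]) auto
  also have "\<dots> = ((a + b * p) * sqrt (c^2 + 2 * l1^2))^2"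
    by (simp add: power_mult_distrib)
  finally show ?thesis
    unfolding a_def[symmetric] b_def[symmetric]
    by (rule power2_le_imp_le) (use a b assms(2) in simp)
qed

lemma H_integrand_alt: "H_integrand l1 l2 c th p = (c^2 / g p - c) / B p + (Dc c th)^2 * B p / g p"
  unfolding H_integrand_def using g_pos[of p] B_pos[of p] by (simp add: field_simps power2_eq_square)

lemma H_integrand_ge_hyperbola:
  assumes "0 \<le> cos th" and "0 \<le> p"
  shows "c^3 / (l1^2 * sqrt (c^2 + 2 * l1^2)) / (sqrt margin + sqrt (l1^2 - l2^2 + 1) * p) - c / l2^2
    \<le> H_integrand l1 l2 c th p"
proof -
  define L where "L = (sqrt margin + sqrt (l1^2 - l2^2 + 1) * p) * sqrt (c^2 + 2 * l1^2)"
  have "0 < L"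
    unfolding L_def using margin_pos assms(2) l2_pos l2_le_l1
    by (intro mult_pos_pos add_pos_nonneg) (simp_all add: power_mono add_nonneg_pos)
  have "c / L \<le> 1 / g p"
    using c_g_le_linear[OF assms] \<open>0 < L\<close> g_pos[of p] by (simp add: L_def field_simps)
  moreover have "c^2 / l1^2 \<le> c^2 / B p"
    using B_le[of p] B_pos[of p] l1_pos by (intro divide_left_mono) simp_all
  ultimately have "c^2 / l1^2 * (c / L) \<le> c^2 / B p * (1 / g p)"
    using \<open>0 < L\<close> c_pos B_pos[of p] by (intro mult_mono) simp_all
  also have "\<dots> \<le> c^2 / (g p * B p) + (Dc c th)^2 * B p / g p"
    using B_pos[of p] g_pos[of p] by (simp add: mult.commute)
  finally have main: "c^2 / l1^2 * (c / L) \<le> c^2 / (g p * B p) + (Dc c th)^2 * B p / g p" .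
  have "c / B p \<le> c / l2^2"
    using B_ge[of p] B_pos[of p] l2_pos c_pos by (intro divide_left_mono) simp_all
  moreover have "c^3 / (l1^2 * sqrt (c^2 + 2 * l1^2)) / (sqrt margin + sqrt (l1^2 - l2^2 + 1) * p)
      = c^2 / l1^2 * (c / L)"
    by (simp add: L_def power3_eq_cube power2_eq_square)
  moreover have "H_integrand l1 l2 c th p = c^2 / (g p * B p) + (Dc c th)^2 * B p / g p - c / B p"
    unfolding H_integrand_alt by (simp add: diff_divide_distrib)
  ultimately show ?thesis
    using main by linarith
qed

lemma continuous_on_H_integrand: "continuous_on S (H_integrand l1 l2 c th)"
  unfolding H_integrand_def[abs_def] using g_pos B_pos
  by (intro continuous_intros continuous_on_g continuous_on_Bfun) (auto simp: less_le)

lemma H_integral_has_integral: "(H_integrand l1 l2 c th has_integral H_integral l1 l2 c th) {0..pi}"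
  unfolding H_integral_def
  by (intro integrable_integral integrable_continuous_interval continuous_on_H_integrand)

lemma H_integral_ge_log:
  assumes "0 \<le> cos th"
  defines "b \<equiv> sqrt (l1^2 - l2^2 + 1)" and "K \<equiv> c^3 / (l1^2 * sqrt (c^2 + 2 * l1^2))"
  shows "K / b * (ln (b * pi) - ln (sqrt margin)) - pi * (c / l2^2) \<le> H_integral l1 l2 c th"
proof -
  define a where "a = sqrt margin"
  have a: "0 < a" and b: "0 < b"
    using margin_pos l2_pos l2_le_l1 by (simp_all add: a_def b_def power_mono add_nonneg_pos)
  have K: "0 < K"
    using c_pos l1_pos by (simp add: K_def add_pos_nonneg)
  define K2 where "K2 = c / l2^2"
  define F where "F x = K * ln (a + b * x) / b - K2 * x" for x
  have pos: "0 < a + b * x" if "0 \<le> x" for x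
    using a b that by (simp add: add_pos_nonneg)
  have "((\<lambda>x. K / (a + b * x) - K2) has_integral F pi - F 0) {0..pi}"
  proof (rule fundamental_theorem_of_calculus)
    show "(F has_vector_derivative K / (a + b * x) - K2) (at x within {0..pi})"
      if "x \<in> {0..pi}" for x
    proof -
      have "(F has_real_derivative K * (b / (a + b * x)) / b - K2) (at x)"
        unfolding F_def using pos[of x] that by (auto intro!: derivative_eq_intros)
      then show ?thesis
        using b by (simp add: has_real_derivative_iff_has_vector_derivative has_vector_derivative_at_within)
    qed
  qed simp
  then have "F pi - F 0 \<le> H_integral l1 l2 c th"
    by (rule has_integral_le[OF _ H_integral_has_integral])
      (use H_integrand_ge_hyperbola[OF assms(1)] in \<open>simp add: a_def b_def K_def K2_def\<close>)
  moreover have "K / b * (ln (b * pi) - ln a) \<le> K / b * (ln (a + b * pi) - ln a)"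
    using K b a pos[of pi] by (intro mult_left_mono) auto
  moreover have "F pi - F 0 = K / b * (ln (a + b * pi) - ln a) - pi * (c / l2^2)"
    using b by (simp add: F_def K2_def field_simps)
  ultimately show ?thesis
    unfolding a_def by linarith
qed

end

section \<open>Dependence on theta\<close>

lemma admissible_smaller_angle:
  assumes "admissible l1 l2 c t1" and "0 \<le> t" "t \<le> t1" "t1 \<le> pi"
  shows "admissible l1 l2 c t"
proof -
  have "cos t1 \<le> cos t"
    using assms by (intro cos_monotone_0_pi_le) auto
  then show ?thesis
    using assms(1) unfolding admissible_def by auto
qed

lemma H_integrand_strict_mono_angle:
  assumes adm1: "admissible l1 l2 c t1" and adm2: "admissible l1 l2 c t2"
    and "0 \<le> t1" "t1 < t2" "t2 \<le> pi / 2"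
  shows "H_integrand l1 l2 c t1 p < H_integrand l1 l2 c t2 p"
proof -
  interpret A1: admissible l1 l2 c t1 by (fact adm1)
  interpret A2: admissible l1 l2 c t2 by (fact adm2)
  let ?B = "Bfun l1 l2 p" and ?g1 = "phirhs l1 l2 c t1 p" and ?g2 = "phirhs l1 l2 c t2 p"
  have "0 \<le> sin t1" "sin t1 \<le> sin t2"
    using assms by (auto intro: sin_ge_zero simp: sin_mono_le_eq)
  then have "(Dc c t1)^2 \<le> (Dc c t2)^2"
    using A1.c_pos by (intro power_mono) (simp_all add: Dc_def divide_right_mono)
  then have numerator: "(Dc c t1)^2 * ?B^2 + c^2 \<le> (Dc c t2)^2 * ?B^2 + c^2"
    by (simp add: mult_right_mono)
  have "0 \<le> cos t2" "cos t2 < cos t1"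
    using assms by (auto intro!: cos_ge_zero cos_monotone_0_pi)
  then have "0 < c^2 + cos t2 * ?B" "cos t2 < cos t1"
    using A1.B_pos[of p] A1.c_pos by (auto intro!: add_pos_nonneg)
  then have "(c^2 + cos t2 * ?B)^2 < (c^2 + cos t1 * ?B)^2"
    using A1.B_pos[of p] by (intro power_strict_mono) auto
  then have "c^2 * ?g2^2 < c^2 * ?g1^2"
    unfolding A1.c_sq_g_sq A2.c_sq_g_sq by simp
  then have "?g2 < ?g1"
    using A1.c_pos A1.g_pos[of p] A2.g_pos[of p] by (simp add: power_less_imp_less_base)
  then have "((Dc c t1)^2 * ?B^2 + c^2) / (?g1 * ?B) < ((Dc c t1)^2 * ?B^2 + c^2) / (?g2 * ?B)"
    using A1.B_pos[of p] A2.g_pos[of p] A1.c_pos by (intro divide_strict_left_mono) (auto intro: add_nonneg_pos)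
  also have "\<dots> \<le> ((Dc c t2)^2 * ?B^2 + c^2) / (?g2 * ?B)"
    using numerator A1.B_pos[of p] A2.g_pos[of p] by (intro divide_right_mono) auto
  finally show ?thesis
    unfolding H_integrand_def by simp
qed

lemma H_integral_strict_mono_angle:
  assumes "admissible l1 l2 c t1" and "admissible l1 l2 c t2"
    and "0 \<le> t1" "t1 < t2" "t2 \<le> pi / 2"
  shows "H_integral l1 l2 c t1 < H_integral l1 l2 c t2"
  unfolding H_integral_def
  using assms H_integrand_strict_mono_angle[OF assms]
  by (intro integral_less_real admissible.continuous_on_H_integrand) auto

lemma continuous_on_H_integral:
  assumes adm: "admissible l1 l2 c t1" and "t1 \<le> pi"
  shows "continuous_on {0..t1} (H_integral l1 l2 c)"
proof -
  interpret admissible l1 l2 c t1 by (fact adm)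
  have "phirhs l1 l2 c t p \<noteq> 0" if "t \<in> {0..t1}" for t p
  proof -
    interpret At: admissible l1 l2 c t
      using that assms by (intro admissible_smaller_angle[OF adm]) auto
    show ?thesis using At.g_pos[of p] by simp
  qed
  then have "continuous_on ({0..t1} \<times> cbox 0 pi) (\<lambda>(t, p). H_integrand l1 l2 c t p)"
    unfolding H_integrand_def phirhs_def Bfun_def Dc_def case_prod_beta
    using c_pos B_pos by (intro continuous_intros) (auto simp: phirhs_def Bfun_def less_le)
  from integral_continuous_on_param[OF this] show ?thesis
    unfolding H_integral_def[abs_def] by simp
qed

lemma H_integral_0_neg:
  assumes "admissible l1 l2 c 0"
  shows "H_integral l1 l2 c 0 < 0"
proof -
  interpret admissible l1 l2 c 0 by fact
  have neg: "H_integrand l1 l2 c 0 p < 0" for p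
  proof -
    have "c^2 < (g p)^2"
      using g_sq[of p] B_pos[of p] by (simp add: Dc_def)
    then have "c * c < c * g p"
      using c_pos g_pos[of p] by (simp add: power_less_imp_less_base)
    then have "c^2 / g p - c < 0"
      using g_pos[of p] by (simp add: power2_eq_square divide_less_eq)
    then show ?thesis
      unfolding H_integrand_alt using B_pos[of p] by (simp add: Dc_def divide_neg_pos)
  qed
  have "integral {0..pi} (H_integrand l1 l2 c 0) < integral {0..pi} (\<lambda>_. 0::real)"
    by (intro integral_less_real continuous_on_H_integrand continuous_on_const neg) (simp add: not_le)
  then show ?thesis
    by (simp add: H_integral_def)
qed

lemma H_integral_pi_half_pos:
  assumes "admissible l1 l2 c (pi / 2)"
  shows "0 < H_integral l1 l2 c (pi / 2)"
proof -
  interpret admissible l1 l2 c "pi / 2" by fact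
  have pos: "0 < H_integrand l1 l2 c (pi / 2) p" for p
  proof -
    have "(g p)^2 < c^2"
      using g_sq[of p] B_pos[of p] c_pos by (simp add: Dc_def)
    then have "g p * g p < c * g p"
      using c_pos g_pos[of p] by (simp add: power_less_imp_less_base)
    then have "0 < c^2 / g p - c"
      using g_pos[of p] by (simp add: power2_eq_square less_divide_eq)
    then show ?thesis
      unfolding H_integrand_alt using B_pos[of p] g_pos[of p] c_pos
      by (intro add_pos_nonneg divide_pos_pos) (simp_all add: Dc_def)
  qed
  have "integral {0..pi} (\<lambda>_. 0::real) < integral {0..pi} (H_integrand l1 l2 c (pi / 2))"
    by (intro integral_less_real continuous_on_H_integrand continuous_on_const pos) (simp add: not_le)
  then show ?thesis
    by (simp add: H_integral_def)
qed

lemma exists_angle_cos_eq: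
  assumes "0 < k" "k < 1"
  shows "\<exists>t. 0 < t \<and> t < pi / 2 \<and> cos t = k"
proof (intro exI conjI)
  have "arccos k < arccos 0" "arccos 1 < arccos k"
    by (rule arccos_less_arccos; use assms in simp)+
  then show "0 < arccos k" "arccos k < pi / 2"
    by simp_all
  show "cos (arccos k) = k"
    using assms by simp
qed

lemma H_integral_pos_near_boundary:
  assumes "0 < l2" "l2 \<le> l1" "0 < c" "c \<le> l1"
  shows "\<exists>t. 0 < t \<and> t < pi / 2 \<and> admissible l1 l2 c t \<and> 0 < H_integral l1 l2 c t"
proof -
  define b where "b = sqrt (l1^2 - l2^2 + 1)"
  define K where "K = c^3 / (l1^2 * sqrt (c^2 + 2 * l1^2))"
  define L where "L = ln (b * pi) - pi * (c / l2^2) * b / K"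
  define a where "a = min (c / 2) (exp L / 2)"
  have l1: "0 < l1" using assms by linarith
  have b: "0 < b" and K: "0 < K"
    using assms by (simp_all add: b_def K_def power_mono add_nonneg_pos add_pos_nonneg)
  have "a \<le> exp L / 2"
    by (simp add: a_def)
  then have "a < exp L"
    using exp_gt_zero[of L] by linarith
  then have a: "0 < a" "a < c" "a < exp L"
    using assms by (auto simp: a_def)
  have "0 < a^2" "a^2 < c^2" "c^2 \<le> l1^2"
    using a assms by (auto intro: power_strict_mono power_mono)
  then have "0 < c^2 - a^2" "c^2 - a^2 < l1^2"
    by linarith+
  then obtain t where t: "0 < t" "t < pi / 2" and cos_t: "cos t = 1 - (c^2 - a^2) / l1^2"
    using exists_angle_cos_eq[of "1 - (c^2 - a^2) / l1^2"] l1 by auto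
  have adm: "admissible l1 l2 c t"
    unfolding admissible_def using assms a l1 by (simp add: cos_t field_simps)
  interpret admissible l1 l2 c t by (fact adm)
  have "sqrt margin = a"
    using a l1 by (simp add: margin_def cos_t field_simps)
  have "ln a < L"
    using ln_less_cancel_iff[of a "exp L"] a by simp
  then have "K / b * (pi * (c / l2^2) * b / K) < K / b * (ln (b * pi) - ln a)"
    using b K by (intro mult_strict_left_mono) (simp_all add: L_def)
  then have "0 < K / b * (ln (b * pi) - ln (sqrt margin)) - pi * (c / l2^2)"
    using b K \<open>sqrt margin = a\<close> by simp
  also have "\<dots> \<le> H_integral l1 l2 c t"
    using H_integral_ge_log \<open>0 < c^2 - a^2\<close> \<open>c^2 - a^2 < l1^2\<close> l1
    unfolding b_def K_def cos_t by (simp add: field_simps)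
  finally show ?thesis
    using t adm by blast
qed

lemma H_integral_pos_somewhere:
  assumes "0 < l2" "l2 \<le> l1" "0 < c"
  obtains t where "0 < t" "t \<le> pi / 2" "admissible l1 l2 c t" "0 < H_integral l1 l2 c t"
proof (cases "c \<le> l1")
  case True
  then show ?thesis
    using H_integral_pos_near_boundary[OF assms True] that by force
next
  case False
  then have "l1^2 < c^2"
    using assms by (intro power_strict_mono) auto
  then have "admissible l1 l2 c (pi / 2)"
    unfolding admissible_def using assms by (simp add: field_simps)
  then show ?thesis
    using H_integral_pi_half_pos that[of "pi / 2"] by simp
qed

lemma H_integral_unique_root:
  assumes "0 < l2" "l2 \<le> l1" "0 < c"
  shows "\<exists>!t. 0 < t \<and> t < pi / 2 \<and> admissible l1 l2 c t \<and> H_integral l1 l2 c t = 0"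
proof (rule ex_ex1I)
  obtain t1 where t1: "0 < t1" "t1 \<le> pi / 2" "admissible l1 l2 c t1" "0 < H_integral l1 l2 c t1"
    using H_integral_pos_somewhere[OF assms] .
  have adm0: "admissible l1 l2 c 0"
    using admissible_smaller_angle[OF t1(3)] t1 by simp
  obtain t where t: "0 \<le> t" "t \<le> t1" "H_integral l1 l2 c t = 0"
    using IVT'[of "H_integral l1 l2 c" 0 0 t1] continuous_on_H_integral[OF t1(3)]
      H_integral_0_neg[OF adm0] t1 by force
  moreover have "t \<noteq> 0"
    using t H_integral_0_neg[OF adm0] by auto
  moreover have "t \<noteq> t1"
    using t t1 by auto
  moreover have "admissible l1 l2 c t"
    using admissible_smaller_angle[OF t1(3)] t t1 by simp
  ultimately show "\<exists>t. 0 < t \<and> t < pi / 2 \<and> admissible l1 l2 c t \<and> H_integral l1 l2 c t = 0"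
    using t1 by (intro exI[of _ t]) auto
next
  fix t t'
  assume "0 < t \<and> t < pi / 2 \<and> admissible l1 l2 c t \<and> H_integral l1 l2 c t = 0"
    and "0 < t' \<and> t' < pi / 2 \<and> admissible l1 l2 c t' \<and> H_integral l1 l2 c t' = 0"
  then show "t = t'"
    using H_integral_strict_mono_angle[of l1 l2 c t t'] H_integral_strict_mono_angle[of l1 l2 c t' t]
    by (cases t t' rule: linorder_cases) auto
qed

lemma less_theta_plus_iff:
  assumes "0 < l1" "0 \<le> c" and "0 \<le> t" "t < pi"
  shows "t < theta_plus l1 c \<longleftrightarrow> 1 - c^2 / l1^2 < cos t"
proof (cases "sqrt 2 * l1 < c")
  case True
  then have "(sqrt 2 * l1)^2 < c^2"
    using assms by (intro power_strict_mono) auto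
  then have "2 < c^2 / l1^2"
    using assms by (simp add: power_mult_distrib field_simps)
  then have "1 - c^2 / l1^2 < cos t"
    using cos_ge_minus_one[of t] by linarith
  then show ?thesis
    using True assms unfolding theta_plus_def by simp
next
  case False
  define k where "k = 1 - c^2 / l1^2"
  have "c^2 \<le> (sqrt 2 * l1)^2"
    using False assms by (intro power_mono) auto
  then have k: "-1 \<le> k" "k \<le> 1"
    using assms by (simp_all add: k_def power_mult_distrib field_simps)
  have "cos (arccos k) < cos t \<longleftrightarrow> t < arccos k"
    using assms k by (intro cos_mono_less_eq arccos_lbound arccos_ubound) auto
  then show ?thesis
    using False k unfolding theta_plus_def k_def by simp
qed

lemma theta_tilde_spec:
  assumes "0 < l2" "l2 \<le> l1" "0 < c"
  shows "admissible l1 l2 c (theta_tilde l1 l2 c)" and "Hfun l1 l2 c (theta_tilde l1 l2 c) = 0"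
proof -
  have "0 < l1" using assms by linarith
  have "(0 < t \<and> t < pi / 2 \<and> t < theta_plus l1 c \<and> Hfun l1 l2 c t = 0)
      \<longleftrightarrow> (0 < t \<and> t < pi / 2 \<and> admissible l1 l2 c t \<and> H_integral l1 l2 c t = 0)" for t
    using less_theta_plus_iff[OF \<open>0 < l1\<close>, of c t] admissible.Hfun_eq_H_integral[of l1 l2 c t] assms
    unfolding admissible_def by auto
  then have "theta_tilde l1 l2 c = (THE t. 0 < t \<and> t < pi / 2 \<and> admissible l1 l2 c t \<and> H_integral l1 l2 c t = 0)"
    unfolding theta_tilde_def by simp
  with theI'[OF H_integral_unique_root[OF assms]]
  have "admissible l1 l2 c (theta_tilde l1 l2 c)" "H_integral l1 l2 c (theta_tilde l1 l2 c) = 0"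
    by simp_all
  then show "admissible l1 l2 c (theta_tilde l1 l2 c)" "Hfun l1 l2 c (theta_tilde l1 l2 c) = 0"
    using admissible.Hfun_eq_H_integral by simp_all
qed

theorem theorem5p2:
  fixes l1 l2 c :: real
  assumes "(l1 > l2 \<and> l2 > 0) \<or> (l1 = 1 \<and> l2 = 1)"
    and "c > 0"
  shows "\<exists>Z::complex. Z \<noteq> 0 \<and>
           (\<forall>z. Xmap l1 l2 c (theta_tilde l1 l2 c) (z + Z) = Xmap l1 l2 c (theta_tilde l1 l2 c) z)"
proof -
  have l: "0 < l2" "l2 \<le> l1"
    using assms(1) by auto
  interpret admissible l1 l2 c "theta_tilde l1 l2 c"
    using theta_tilde_spec(1)[OF l assms(2)] .
  let ?Z = "Complex (2 * time pi) (- 2 * ffun l1 l2 c (theta_tilde l1 l2 c) (time pi) / c)"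
  have "?Z \<noteq> 0"
    using time_pi_pos by (simp add: complex_eq_iff)
  then show ?thesis
    using Xmap_shift_period[OF theta_tilde_spec(2)[OF l assms(2)]] by blast
qed

end
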